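(* In the multiple-choice secretary problem with predictions with capacity $k$, run the Learned Kleinberg algorithm with any threshold $\theta\ge 0$. For every instance with $M=\emptyset$, the algorithm's output $S$ satisfies $v(S)\ge (1-2\epsilon)\,v(S^* )$; in particular the algorithm is $(1-2\epsilon)$-competitive on such instances.
   Context: Multiple-choice secretary problem with predictions (continuous-time model): there are $n$ candidates $N=\{1,\dots,n\}$, each with actual value $v(i)>0$ (unknown in advance) and predicted value $\hat v(i)\ge 0$ (known in advance), and a capacity $k$. Each candidate independently receives an arrival time uniform on $[0,1]$; candidates are revealed in increasing order of arrival time, revealing index and actual value, and the algorithm irrevocably decides upon arrival whether to hire; at most $k$ candidates may be hired. For $S\subseteq N$, $v(S)=\sum_{i\in S}v(i)$, $\hat v(S)=\sum_{i\in S}\hat v(i)$. $S^*$ is a set of at most $k$ candidates maximizing $v$, $\epsilon=\max_{i\in N}|1-\hat v(i)/v(i)|$, and $M=\{i\in N : |1-\hat v(i)/v(i)|>\theta\}$. Learned Kleinberg algorithm with capacity $k$ and threshold $\theta$: fix $\hat S\in\arg\max_{S\subseteq N,|S|\le k}\hat v(S)$ and set $S=\emptyset$. Process candidates in arrival order; upon arrival of $i$: if $|1-\hat v(i)/v(i)|>\theta$, hire $i$, let $k'=k-|S|-1$, apply Kleinberg's (2005) multiple-choice secretary algorithm with capacity $k'$ to the remaining candidates obtaining $T$, and output $S\cup\{i\}\cup T$; otherwise, if $i\in\hat S$, hire $i$ (add it to $S$) and output $S$ if $|S|=k$. If all candidates are processed, output $S$. *)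

theory Defs
  imports Main Complex_Main
begin

definition rel_err :: "('a \<Rightarrow> real) \<Rightarrow> ('a \<Rightarrow> real) \<Rightarrow> 'a \<Rightarrow> real" where
  "rel_err v vh i = \<bar>1 - vh i / v i\<bar>"

definition pred_eps :: "'a set \<Rightarrow> ('a \<Rightarrow> real) \<Rightarrow> ('a \<Rightarrow> real) \<Rightarrow> real" where
  "pred_eps N v vh = Max (rel_err v vh ` N)"

definition bad_set :: "'a set \<Rightarrow> ('a \<Rightarrow> real) \<Rightarrow> ('a \<Rightarrow> real) \<Rightarrow> real \<Rightarrow> 'a set" where
  "bad_set N v vh \<theta> = {i \<in> N. rel_err v vh i > \<theta>}"

definition is_opt_set :: "'a set \<Rightarrow> nat \<Rightarrow> ('a \<Rightarrow> real) \<Rightarrow> 'a set \<Rightarrow> bool" where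
  "is_opt_set N k w S \<longleftrightarrow> S \<subseteq> N \<and> card S \<le> k \<and>
     (\<forall>T. T \<subseteq> N \<longrightarrow> card T \<le> k \<longrightarrow> sum w T \<le> sum w S)"

text \<open>Learned Kleinberg algorithm, run on the remaining arrival sequence (candidates
  in increasing order of arrival time), with current hired set S.
  The subroutine kb models Kleinberg's (2005) multiple-choice secretary algorithm:
  kb k' rest is the set it hires with capacity k' when run on the remaining
  arrival sequence rest (for one fixed realisation of its internal randomness).
  Shat is the fixed predicted-optimal set.\<close>
fun learned_kleinberg ::
  "(nat \<Rightarrow> 'a list \<Rightarrow> 'a set) \<Rightarrow> ('a \<Rightarrow> real) \<Rightarrow> ('a \<Rightarrow> real) \<Rightarrow> nat \<Rightarrow> real \<Rightarrow> 'a set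
     \<Rightarrow> 'a list \<Rightarrow> 'a set \<Rightarrow> 'a set" where
  "learned_kleinberg kb v vh k \<theta> Shat [] S = S"
| "learned_kleinberg kb v vh k \<theta> Shat (i # rest) S =
     (if rel_err v vh i > \<theta> then S \<union> {i} \<union> kb (k - card S - 1) rest
      else if i \<in> Shat then
        (if card (insert i S) = k then insert i S
         else learned_kleinberg kb v vh k \<theta> Shat rest (insert i S))
      else learned_kleinberg kb v vh k \<theta> Shat rest S)"

end

theory Submission
  imports Defs
begin

text \<open>If no candidate exceeds the threshold, the algorithm never calls Kleinberg's subroutine and
  simply hires the predicted-optimal set \<open>Shat\<close>, since \<open>|Shat| \<le> k\<close>. From the error bounds
  \<open>(1 - \<epsilon>) v \<le> vh \<le> (1 + \<epsilon>) v\<close> and the optimality of \<open>Shat\<close> for \<open>vh\<close> we get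
  \<open>(1 + \<epsilon>) v(Shat) \<ge> vh(Shat) \<ge> vh(S*) \<ge> (1 - \<epsilon>) v(S*) \<ge> (1 + \<epsilon>)(1 - 2\<epsilon>) v(S*)\<close>.\<close>

lemma learned_kleinberg_no_bad_candidates:
  assumes "distinct l" "finite S" "S \<inter> set l = {}"
    and "\<forall>i\<in>set l. \<not> rel_err v vh i > \<theta>"
    and "card (S \<union> (Shat \<inter> set l)) \<le> k"
  shows "learned_kleinberg kb v vh k \<theta> Shat l S = S \<union> (Shat \<inter> set l)"
  using assms
proof (induction l arbitrary: S)
  case Nil
  then show ?case by simp
next
  case (Cons i rest)
  have good: "\<not> rel_err v vh i > \<theta>" using Cons.prems(4) by simp
  show ?case
  proof (cases "i \<in> Shat")
    case True
    have hired: "S \<union> (Shat \<inter> set (i # rest)) = insert i S \<union> (Shat \<inter> set rest)"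
      using True by auto
    have rest_result: "learned_kleinberg kb v vh k \<theta> Shat rest (insert i S)
        = insert i S \<union> (Shat \<inter> set rest)"
      using Cons.IH[of "insert i S"] Cons.prems hired by auto
    show ?thesis
    proof (cases "card (insert i S) = k")
      case full: True
      have "finite (insert i S \<union> (Shat \<inter> set rest))" using Cons.prems(2) by simp
      then have "insert i S = insert i S \<union> (Shat \<inter> set rest)"
        using Cons.prems(5) full hired by (metis Un_upper1 card_mono card_subset_eq le_antisym)
      then show ?thesis using True full good hired by simp
    next
      case False
      then show ?thesis using True good hired rest_result by simp
    qed
  next
    case False
    then show ?thesis using Cons.IH[of S] Cons.prems good by auto
  qed
qed

lemma rel_err_le_imp_bounds:
  assumes "v i > 0" and "rel_err v vh i \<le> e"
  shows "(1 - e) * v i \<le> vh i" and "vh i \<le> (1 + e) * v i"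
proof -
  have "1 - e \<le> vh i / v i" "vh i / v i \<le> 1 + e"
    using assms(2) unfolding rel_err_def by linarith+
  then show "(1 - e) * v i \<le> vh i" and "vh i \<le> (1 + e) * v i"
    using assms(1) by (simp_all add: le_divide_eq divide_le_eq)
qed

lemma rel_err_le_pred_eps:
  assumes "finite N" and "i \<in> N"
  shows "rel_err v vh i \<le> pred_eps N v vh"
  using assms unfolding pred_eps_def by simp

lemma predicted_opt_set_competitive:
  assumes pos: "\<forall>i\<in>N. v i > 0"
    and err: "\<forall>i\<in>N. rel_err v vh i \<le> e"
    and opt_pred: "is_opt_set N k vh Shat"
    and opt: "is_opt_set N k v Sstar"
  shows "(1 - 2 * e) * sum v Sstar \<le> sum v Shat"
proof (cases "Sstar = {}")
  case True
  \<comment> \<open>Here \<open>e\<close> may be negative, e.g. \<open>pred_eps {} v vh = Max {}\<close> is unspecified.\<close>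
  have "Shat \<subseteq> N" using opt_pred unfolding is_opt_set_def by simp
  then have "0 \<le> sum v Shat" using pos by (meson less_imp_le subsetD sum_nonneg)
  then show ?thesis using True by simp
next
  case False
  have Shat: "Shat \<subseteq> N" and Sstar: "Sstar \<subseteq> N" and "sum vh Sstar \<le> sum vh Shat"
    using opt_pred opt unfolding is_opt_set_def by auto
  have "0 \<le> e"
  proof -
    obtain i where "i \<in> Sstar" using False by blast
    then have "rel_err v vh i \<le> e" using err Sstar by blast
    then show ?thesis unfolding rel_err_def by linarith
  qed
  have lower: "(1 - e) * v i \<le> vh i" and upper: "vh i \<le> (1 + e) * v i" if "i \<in> N" for i
    using that pos err rel_err_le_imp_bounds[of v i vh e] by simp_all
  have "(1 + e) * (1 - 2 * e) \<le> 1 - e" by (simp add: algebra_simps)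
  moreover have "0 \<le> sum v Sstar" using pos Sstar by (meson less_imp_le subsetD sum_nonneg)
  ultimately have "(1 + e) * (1 - 2 * e) * sum v Sstar \<le> (1 - e) * sum v Sstar"
    by (rule mult_right_mono)
  also have "\<dots> \<le> sum vh Sstar"
    unfolding sum_distrib_left using lower Sstar by (intro sum_mono) auto
  also have "\<dots> \<le> sum vh Shat" by fact
  also have "\<dots> \<le> (1 + e) * sum v Shat"
    unfolding sum_distrib_left using upper Shat by (intro sum_mono) auto
  finally have "(1 + e) * ((1 - 2 * e) * sum v Sstar) \<le> (1 + e) * sum v Shat"
    by (simp only: mult.assoc)
  then show ?thesis using \<open>0 \<le> e\<close> by (simp add: mult_le_cancel_left_pos)
qed

theorem lemma1:
  fixes N :: "'a set" and v vh :: "'a \<Rightarrow> real" and k :: nat and \<theta> :: real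
    and \<sigma> :: "'a list" and kb :: "nat \<Rightarrow> 'a list \<Rightarrow> 'a set"
    and Shat Sstar :: "'a set"
  assumes "finite N"
    and "\<forall>i\<in>N. v i > 0"
    and "\<forall>i\<in>N. vh i \<ge> 0"
    and "\<theta> \<ge> 0"
    and "distinct \<sigma>" and "set \<sigma> = N"
    and "is_opt_set N k vh Shat"
    and "is_opt_set N k v Sstar"
    and "bad_set N v vh \<theta> = {}"
  shows "sum v (learned_kleinberg kb v vh k \<theta> Shat \<sigma> {})
           \<ge> (1 - 2 * pred_eps N v vh) * sum v Sstar"
proof -
  have "Shat \<subseteq> N" "card Shat \<le> k"
    using assms(7) unfolding is_opt_set_def by auto
  moreover have "\<forall>i\<in>set \<sigma>. \<not> rel_err v vh i > \<theta>"
    using assms(6,9) unfolding bad_set_def by auto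
  ultimately have "learned_kleinberg kb v vh k \<theta> Shat \<sigma> {} = Shat"
    using learned_kleinberg_no_bad_candidates[of \<sigma> "{}"] assms(5,6) by (simp add: Int_absorb2)
  moreover have "(1 - 2 * pred_eps N v vh) * sum v Sstar \<le> sum v Shat"
  proof (rule predicted_opt_set_competitive)
    show "\<forall>i\<in>N. rel_err v vh i \<le> pred_eps N v vh"
      using rel_err_le_pred_eps[OF assms(1)] by blast
  qed (fact assms)+
  ultimately show ?thesis by simp
qed

end
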